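(* Let $p$ be a prime and let $B\subset\mathbf{Z}/p\mathbf{Z}$ be a balanced set. Then there exists $g\in -B$ such that $\Sigma(B+g)=\mathbf{Z}/p\mathbf{Z}$.
   Context: A subset $B$ of an abelian group is balanced if for every $b\in B$ there exist distinct $b_1,b_2\in B$ with $2b=b_1+b_2$. For a finite set $S$, $\Sigma(S)=\{\sum_{s\in S'}s: S'\subseteq S\}$ is the set of subset sums. Also $-B=\{-b:b\in B\}$ and $B+g=\{b+g:b\in B\}$. *)

theory Defs
  imports Main "HOL-Number_Theory.Cong"
begin

text \<open>Z/pZ is represented by the canonical residues {0..<p} of int,
  with all operations taken modulo p.\<close>

definition zmod :: "int \<Rightarrow> int set" where
  "zmod p = {0..<p}"

definition balanced :: "int \<Rightarrow> int set \<Rightarrow> bool" where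
  "balanced p B \<longleftrightarrow> B \<subseteq> zmod p \<and>
     (\<forall>b\<in>B. \<exists>b1\<in>B. \<exists>b2\<in>B. b1 \<noteq> b2 \<and> [2 * b = b1 + b2] (mod p))"

definition subset_sums :: "int \<Rightarrow> int set \<Rightarrow> int set" where
  "subset_sums p S = {(\<Sum>S') mod p | S'. S' \<subseteq> S}"

definition neg_set :: "int \<Rightarrow> int set \<Rightarrow> int set" where
  "neg_set p B = (\<lambda>b. (- b) mod p) ` B"

definition shift_set :: "int \<Rightarrow> int set \<Rightarrow> int \<Rightarrow> int set" where
  "shift_set p B g = (\<lambda>b. (b + g) mod p) ` B"

end

theory Submission
  imports Defs
begin

(* Choose for every b in B distinct partners y b, z b with 2b = y b + z b, and pick s in B such
   that every point reachable from s along partner edges reaches s back; let C be the set of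
   points reachable from s. Place chips on C, a chip at c being worth c - s. Firing a point
   a \<noteq> s that carries at least two chips moves one chip to each partner of a; this preserves
   the total worth modulo p, as y a + z a - 2a = 0 (mod p). Weighting a chip at c by
   3^(depth - level c), where level c is the distance from c to s, every firing strictly
   increases the total weight, since some partner of a is closer to s. So firing terminates,
   with at most one chip on each point other than s: the worth of any configuration is a subset
   sum of C - s. Finally, m chips on a partner a \<noteq> s of s are worth m (a - s), which runs
   through all of Z/pZ. *)

lemma ex_recurrent_point:
  fixes E :: "'a rel"
  assumes "finite B" "B \<noteq> {}" "E `` B \<subseteq> B"
  shows "\<exists>s\<in>B. \<forall>c\<in>E\<^sup>* `` {s}. (c, s) \<in> E\<^sup>*"
proof -
  have closure_in_B: "E\<^sup>* `` {b} \<subseteq> B" if "b \<in> B" for b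
    using Image_closed_trancl[OF assms(3)] that by blast
  obtain s where s: "s \<in> B" and s_min: "\<And>b. b \<in> B \<Longrightarrow> card (E\<^sup>* `` {s}) \<le> card (E\<^sup>* `` {b})"
    using ex_has_least_nat[of "\<lambda>b. b \<in> B" _ "\<lambda>b. card (E\<^sup>* `` {b})"] assms(2) by blast
  have "(c, s) \<in> E\<^sup>*" if c: "c \<in> E\<^sup>* `` {s}" for c
  proof -
    have sub: "E\<^sup>* `` {c} \<subseteq> E\<^sup>* `` {s}"
      using c by (auto intro: rtrancl_trans)
    have fin: "finite (E\<^sup>* `` {s})"
      using closure_in_B[OF s] assms(1) finite_subset by blast
    have "c \<in> B" using c closure_in_B[OF s] by blast
    then have "E\<^sup>* `` {c} = E\<^sup>* `` {s}"
      using card_subset_eq[OF fin sub] s_min card_mono[OF fin sub] by (simp add: le_antisym)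
    then show ?thesis by blast
  qed
  with s show ?thesis by blast
qed

definition dist_to :: "'a rel \<Rightarrow> 'a \<Rightarrow> 'a \<Rightarrow> nat" where
  "dist_to E s c = (LEAST n. (c, s) \<in> E ^^ n)"

lemma dist_to_decreasing_step:
  assumes "(c, s) \<in> E\<^sup>*" "c \<noteq> s"
  obtains x where "(c, x) \<in> E" "(x, s) \<in> E\<^sup>*" "dist_to E s x < dist_to E s c"
proof -
  have "(c, s) \<in> E ^^ dist_to E s c"
    using assms(1) unfolding dist_to_def rtrancl_power by (rule LeastI_ex)
  moreover obtain k where k: "dist_to E s c = Suc k"
    using calculation assms(2) by (cases "dist_to E s c") auto
  ultimately obtain x where x: "(c, x) \<in> E" "(x, s) \<in> E ^^ k"
    using relpow_Suc_D2 by metis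
  have "dist_to E s x \<le> k"
    unfolding dist_to_def using x(2) by (rule Least_le)
  then show thesis
    using that x k relpow_imp_rtrancl by (metis less_Suc_eq_le)
qed

lemma subset_sums_mono: "S \<subseteq> T \<Longrightarrow> subset_sums p S \<subseteq> subset_sums p T"
  unfolding subset_sums_def by blast

lemma subset_sums_subset_zmod: "p > 0 \<Longrightarrow> subset_sums p S \<subseteq> zmod p"
  unfolding subset_sums_def zmod_def by auto

lemma shift_set_mono: "B \<subseteq> B' \<Longrightarrow> shift_set p B g \<subseteq> shift_set p B' g"
  unfolding shift_set_def by blast

lemma subset_sums_shift_set:
  assumes "C \<subseteq> zmod p"
  shows "subset_sums p (shift_set p C g) = {(\<Sum>c\<in>S. c + g) mod p | S. S \<subseteq> C}"
proof -
  let ?shift = "\<lambda>b. (b + g) mod p"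
  have "inj_on ?shift (zmod p)"
  proof (rule inj_onI)
    fix x y assume "x \<in> zmod p" "y \<in> zmod p" "?shift x = ?shift y"
    then show "x = y"
      using cong_add_rcancel[of x g y p] by (simp add: zmod_def cong_def)
  qed
  then have inj: "inj_on ?shift S" if "S \<subseteq> C" for S
    using assms that inj_on_subset by blast
  have sum_shift: "(\<Sum>(?shift ` S)) mod p = (\<Sum>c\<in>S. c + g) mod p" if "S \<subseteq> C" for S
    using inj[OF that] by (simp add: sum.reindex mod_sum_eq)
  show ?thesis
  proof (intro equalityI subsetI)
    fix u assume "u \<in> subset_sums p (shift_set p C g)"
    then obtain S where "S \<subseteq> C" "u = (\<Sum>(?shift ` S)) mod p"
      unfolding subset_sums_def shift_set_def subset_image_iff by auto
    then show "u \<in> {(\<Sum>c\<in>S. c + g) mod p | S. S \<subseteq> C}"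
      using sum_shift by auto
  next
    fix u assume "u \<in> {(\<Sum>c\<in>S. c + g) mod p | S. S \<subseteq> C}"
    then obtain S where "S \<subseteq> C" "u = (\<Sum>(?shift ` S)) mod p"
      using sum_shift by auto
    then show "u \<in> subset_sums p (shift_set p C g)"
      unfolding subset_sums_def shift_set_def by auto
  qed
qed

definition fire :: "('a \<Rightarrow> nat) \<Rightarrow> 'a \<Rightarrow> 'a \<Rightarrow> 'a \<Rightarrow> 'a \<Rightarrow> nat" where
  "fire v a y z = v(a := v a - 2, y := v y + 1, z := v z + 1)"

lemma sum_fire:
  fixes f :: "'a \<Rightarrow> 'b::comm_ring_1"
  assumes "finite C" "a \<in> C" "y \<in> C" "z \<in> C" "distinct [a, y, z]" "2 \<le> v a"
  shows "(\<Sum>c\<in>C. of_nat (fire v a y z c) * f c)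
    = (\<Sum>c\<in>C. of_nat (v c) * f c) - 2 * f a + f y + f z"
proof -
  have "of_nat (fire v a y z c) * f c = of_nat (v c) * f c
      - (if c = a then 2 * f a else 0) + (if c = y then f y else 0) + (if c = z then f z else 0)" for c
    using assms(5,6) by (cases "c = a"; cases "c = y"; cases "c = z")
      (simp_all add: fire_def left_diff_distrib distrib_right)
  then have "(\<Sum>c\<in>C. of_nat (fire v a y z c) * f c) = (\<Sum>c\<in>C. of_nat (v c) * f c)
      - (\<Sum>c\<in>C. if c = a then 2 * f a else 0) + (\<Sum>c\<in>C. if c = y then f y else 0)
      + (\<Sum>c\<in>C. if c = z then f z else 0)"
    by (simp only: sum.distrib sum_subtractf)
  then show ?thesis
    using assms(1-4) by simp
qed

definition partner_rel :: "('a \<Rightarrow> 'a) \<Rightarrow> ('a \<Rightarrow> 'a) \<Rightarrow> 'a rel" where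
  "partner_rel y z = {(c, x). x = y c \<or> x = z c}"

locale midpoint_component =
  fixes p s :: int and C :: "int set" and y z :: "int \<Rightarrow> int"
  assumes prime: "prime p"
    and residues: "C \<subseteq> zmod p"
    and root: "s \<in> C"
    and partners_in: "c \<in> C \<Longrightarrow> y c \<in> C \<and> z c \<in> C"
    and partners_distinct: "c \<in> C \<Longrightarrow> y c \<noteq> z c"
    and midpoint: "c \<in> C \<Longrightarrow> [2 * c = y c + z c] (mod p)"
    and reaches_root: "c \<in> C \<Longrightarrow> (c, s) \<in> (partner_rel y z)\<^sup>*"
begin

lemma finite_C: "finite C"
  using residues finite_subset unfolding zmod_def by blast

lemma eq_if_cong: "c \<in> C \<Longrightarrow> c' \<in> C \<Longrightarrow> [c = c'] (mod p) \<Longrightarrow> c = c'"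
  using residues unfolding zmod_def cong_def by (auto simp: subset_iff)

lemma partners_ne_self:
  assumes "c \<in> C"
  shows "y c \<noteq> c" "z c \<noteq> c"
proof -
  have sum: "[c + c = y c + z c] (mod p)"
    using midpoint[OF assms] unfolding mult_2 .
  have yz: "y c \<in> C" "z c \<in> C" "y c \<noteq> z c"
    using partners_in[OF assms] partners_distinct[OF assms] by auto
  show "y c \<noteq> c"
  proof
    assume "y c = c"
    have "[c = z c] (mod p)"
      using sum unfolding \<open>y c = c\<close> cong_add_lcancel .
    then have "c = z c"
      using eq_if_cong assms yz(2) by blast
    with \<open>y c = c\<close> yz(3) show False
      by simp
  qed
  show "z c \<noteq> c"
  proof
    assume "z c = c"
    have "[c = y c] (mod p)"
      using sum unfolding \<open>z c = c\<close> cong_add_rcancel .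
    then have "c = y c"
      using eq_if_cong assms yz(1) by blast
    with \<open>z c = c\<close> yz(3) show False
      by simp
  qed
qed

abbreviation level :: "int \<Rightarrow> nat" where
  "level \<equiv> dist_to (partner_rel y z) s"

definition depth :: nat where
  "depth = Max (level ` C)"

definition weight :: "int \<Rightarrow> int" where
  "weight c = 3 ^ (depth - level c)"

definition chips :: "(int \<Rightarrow> nat) \<Rightarrow> int" where
  "chips v = (\<Sum>c\<in>C. int (v c))"

definition potential :: "(int \<Rightarrow> nat) \<Rightarrow> int" where
  "potential v = (\<Sum>c\<in>C. int (v c) * weight c)"

definition chip_value :: "(int \<Rightarrow> nat) \<Rightarrow> int" where
  "chip_value v = (\<Sum>c\<in>C. int (v c) * (c - s))"

abbreviation fire_at :: "(int \<Rightarrow> nat) \<Rightarrow> int \<Rightarrow> int \<Rightarrow> nat" where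
  "fire_at v a \<equiv> fire v a (y a) (z a)"

lemma sum_fire_at:
  fixes f :: "int \<Rightarrow> int"
  assumes "a \<in> C" "2 \<le> v a"
  shows "(\<Sum>c\<in>C. int (fire_at v a c) * f c)
    = (\<Sum>c\<in>C. int (v c) * f c) - 2 * f a + f (y a) + f (z a)"
  using sum_fire[where v = v and a = a and y = "y a" and z = "z a", OF finite_C assms(1) _ _ _ assms(2)]
    partners_in[OF assms(1)] partners_ne_self[OF assms(1)] partners_distinct[OF assms(1)]
  by auto

lemma chips_fire_at: "a \<in> C \<Longrightarrow> 2 \<le> v a \<Longrightarrow> chips (fire_at v a) = chips v"
  using sum_fire_at[where f = "\<lambda>_. 1"] by (simp add: chips_def)

lemma chip_value_fire_at:
  assumes "a \<in> C" "2 \<le> v a"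
  shows "[chip_value (fire_at v a) = chip_value v] (mod p)"
proof -
  have "chip_value (fire_at v a) = chip_value v + (y a + z a - 2 * a)"
    using sum_fire_at[where f = "\<lambda>c. c - s" and v = v, OF assms] by (simp add: chip_value_def)
  moreover have "[y a + z a - 2 * a = 0] (mod p)"
    using cong_sym[OF midpoint[OF assms(1)]] by (simp add: cong_0_iff cong_iff_dvd_diff)
  then have "[chip_value v + (y a + z a - 2 * a) = chip_value v + 0] (mod p)"
    by (intro cong_add cong_refl)
  ultimately show ?thesis
    by simp
qed

lemma potential_fire_at:
  assumes "a \<in> C" "a \<noteq> s" "2 \<le> v a"
  shows "potential v < potential (fire_at v a)"
proof -
  obtain x where x: "x = y a \<or> x = z a" and "level x < level a"
    using dist_to_decreasing_step[OF reaches_root[OF assms(1)] assms(2)]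
    by (auto simp: partner_rel_def)
  moreover have "level a \<le> depth"
    unfolding depth_def using finite_C assms(1) by simp
  ultimately have "weight x \<ge> 3 * weight a"
    unfolding weight_def by (simp flip: power_Suc add: power_increasing)
  moreover have "weight a > 0" "weight (y a) > 0" "weight (z a) > 0"
    by (simp_all add: weight_def)
  ultimately have "weight (y a) + weight (z a) > 2 * weight a"
    using x by auto
  then show ?thesis
    using sum_fire_at[where f = weight and v = v, OF assms(1,3)] by (simp add: potential_def)
qed

lemma potential_le: "potential v \<le> chips v * 3 ^ depth"
proof -
  have "potential v \<le> (\<Sum>c\<in>C. int (v c) * 3 ^ depth)"
    unfolding potential_def weight_def
    by (intro sum_mono mult_left_mono) (auto intro: power_increasing)
  then show ?thesis
    by (simp add: chips_def sum_distrib_right)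
qed

lemma stable_chip_value_subset_sum:
  assumes "\<forall>c\<in>C - {s}. v c \<le> 1"
  shows "\<exists>S\<subseteq>C. chip_value v = (\<Sum>c\<in>S. c - s)"
proof -
  define S where "S = {c \<in> C - {s}. v c = 1}"
  have "int (v c) * (c - s) = (if c \<in> S then c - s else 0)" if "c \<in> C" for c
    using assms that by (cases "c = s") (auto simp: S_def le_Suc_eq)
  then have "chip_value v = (\<Sum>c\<in>C. if c \<in> S then c - s else 0)"
    unfolding chip_value_def by (rule sum.cong[OF refl])
  also have "\<dots> = (\<Sum>c\<in>{c \<in> C. c \<in> S}. c - s)"
    using finite_C by (rule sum.inter_filter[symmetric])
  also have "{c \<in> C. c \<in> S} = S"
    by (auto simp: S_def)
  finally have "chip_value v = (\<Sum>c\<in>S. c - s)" .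
  moreover have "S \<subseteq> C"
    by (auto simp: S_def)
  ultimately show ?thesis
    by blast
qed

lemma chip_value_subset_sum: "\<exists>S\<subseteq>C. [chip_value v = (\<Sum>c\<in>S. c - s)] (mod p)"
proof (induction "nat (chips v * 3 ^ depth - potential v)" arbitrary: v rule: less_induct)
  case less
  show ?case
  proof (cases "\<forall>c\<in>C - {s}. v c \<le> 1")
    case True
    then obtain S where "S \<subseteq> C" "chip_value v = (\<Sum>c\<in>S. c - s)"
      using stable_chip_value_subset_sum by blast
    then show ?thesis
      by auto
  next
    case False
    then obtain a where "a \<in> C" "a \<noteq> s" "\<not> v a \<le> 1"
      by blast
    then have a: "a \<in> C" "a \<noteq> s" "2 \<le> v a"
      by auto
    have "potential (fire_at v a) \<le> chips v * 3 ^ depth"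
      using potential_le[of "fire_at v a"] chips_fire_at[where v = v, OF a(1,3)] by simp
    then have "nat (chips (fire_at v a) * 3 ^ depth - potential (fire_at v a))
        < nat (chips v * 3 ^ depth - potential v)"
      using potential_fire_at[where v = v, OF a] chips_fire_at[where v = v, OF a(1,3)] by simp
    then obtain S where S: "S \<subseteq> C" "[chip_value (fire_at v a) = (\<Sum>c\<in>S. c - s)] (mod p)"
      using less.hyps by blast
    have "[chip_value v = (\<Sum>c\<in>S. c - s)] (mod p)"
      using cong_trans[OF cong_sym[OF chip_value_fire_at[where v = v, OF a(1,3)]] S(2)] .
    with S(1) show ?thesis
      by blast
  qed
qed

lemma every_residue_is_chip_value: "\<exists>v. [chip_value v = u] (mod p)"
proof -
  define a where "a = y s"
  have a: "a \<in> C" "a \<noteq> s"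
    using partners_in[OF root] partners_ne_self[OF root] by (auto simp: a_def)
  have "\<not> [a = s] (mod p)"
    using eq_if_cong a root by blast
  then have "coprime (a - s) p"
    using prime prime_imp_coprime coprime_commute cong_iff_dvd_diff by metis
  then obtain x where x: "[(a - s) * x = 1] (mod p)"
    using cong_solve_coprime_int by blast
  define m where "m = nat ((u * x) mod p)"
  define v where "v = (\<lambda>c. if c = a then m else 0)"
  have "chip_value v = (\<Sum>c\<in>C. if c = a then int m * (a - s) else 0)"
    unfolding chip_value_def v_def by (rule sum.cong) auto
  also have "\<dots> = int m * (a - s)"
    using finite_C a(1) by simp
  also have "[int m * (a - s) = u * ((a - s) * x)] (mod p)"
    using prime_gt_0_int[OF prime] unfolding m_def cong_def
    by (simp add: mod_mult_right_eq mult.commute mult.left_commute)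
  also have "[u * ((a - s) * x) = u * 1] (mod p)"
    using x by (rule cong_scalar_left)
  finally show ?thesis
    by auto
qed

theorem subset_sums_shift_root: "subset_sums p (shift_set p C ((- s) mod p)) = zmod p"
proof (intro equalityI subsetI)
  fix u assume "u \<in> subset_sums p (shift_set p C ((- s) mod p))"
  then show "u \<in> zmod p"
    using subset_sums_subset_zmod prime_gt_0_int[OF prime] by blast
next
  fix u assume u: "u \<in> zmod p"
  obtain v where v: "[chip_value v = u] (mod p)"
    using every_residue_is_chip_value by blast
  obtain S where S: "S \<subseteq> C" "[chip_value v = (\<Sum>c\<in>S. c - s)] (mod p)"
    using chip_value_subset_sum by blast
  have "[(\<Sum>c\<in>S. c - s) = u] (mod p)"
    using cong_trans[OF cong_sym[OF S(2)] v] .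
  moreover have "[(\<Sum>c\<in>S. c + (- s) mod p) = (\<Sum>c\<in>S. c - s)] (mod p)"
    by (rule cong_sum) (simp add: cong_def mod_add_right_eq)
  ultimately have "u = (\<Sum>c\<in>S. c + (- s) mod p) mod p"
    using u unfolding cong_def zmod_def by simp
  with S(1) show "u \<in> subset_sums p (shift_set p C ((- s) mod p))"
    unfolding subset_sums_shift_set[OF residues] by blast
qed

end

lemma balanced_partners:
  assumes "balanced p B"
  obtains y z :: "int \<Rightarrow> int"
  where "\<And>b. b \<in> B \<Longrightarrow> y b \<in> B \<and> z b \<in> B \<and> y b \<noteq> z b \<and> [2 * b = y b + z b] (mod p)"
proof -
  have "\<forall>b\<in>B. \<exists>q. fst q \<in> B \<and> snd q \<in> B \<and> fst q \<noteq> snd q \<and> [2 * b = fst q + snd q] (mod p)"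
    using assms unfolding balanced_def by fastforce
  from bchoice[OF this] obtain f where "\<forall>b\<in>B. fst (f b) \<in> B \<and> snd (f b) \<in> B \<and> fst (f b) \<noteq> snd (f b)
      \<and> [2 * b = fst (f b) + snd (f b)] (mod p)"
    by blast
  then show thesis
    by (intro that[of "\<lambda>b. fst (f b)" "\<lambda>b. snd (f b)"]) blast
qed

theorem proposition4p3:
  fixes p :: int and B :: "int set"
  assumes "prime p"
    and "balanced p B"
    and "B \<noteq> {}"
  shows "\<exists>g\<in>neg_set p B. subset_sums p (shift_set p B g) = zmod p"
proof -
  have B_residues: "B \<subseteq> zmod p"
    using assms(2) by (simp add: balanced_def)
  obtain y z where yz: "\<And>b. b \<in> B \<Longrightarrow> y b \<in> B \<and> z b \<in> B \<and> y b \<noteq> z b \<and> [2 * b = y b + z b] (mod p)"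
    using balanced_partners[OF assms(2)] by blast
  let ?E = "partner_rel y z"
  have closed: "?E `` B \<subseteq> B"
    using yz by (auto simp: partner_rel_def)
  obtain s where s: "s \<in> B" and recurrent: "\<forall>c\<in>?E\<^sup>* `` {s}. (c, s) \<in> ?E\<^sup>*"
    using ex_recurrent_point[OF finite_subset[OF B_residues] assms(3) closed]
    by (auto simp: zmod_def)
  define C where "C = ?E\<^sup>* `` {s}"
  have "C \<subseteq> B"
    using Image_closed_trancl[OF closed] s by (auto simp: C_def)
  interpret midpoint_component p s C y z
  proof
    show "c \<in> C \<Longrightarrow> y c \<in> C \<and> z c \<in> C" for c
      unfolding C_def by (auto intro: rtrancl_into_rtrancl simp: partner_rel_def)
  qed (use assms(1) B_residues \<open>C \<subseteq> B\<close> yz recurrent in \<open>auto simp: C_def\<close>)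
  have "subset_sums p (shift_set p B ((- s) mod p)) = zmod p"
    using subset_sums_shift_root subset_sums_mono[OF shift_set_mono[OF \<open>C \<subseteq> B\<close>]]
      subset_sums_subset_zmod[OF prime_gt_0_int[OF assms(1)]] by blast
  moreover have "(- s) mod p \<in> neg_set p B"
    using s by (simp add: neg_set_def)
  ultimately show ?thesis
    by blast
qed

end
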